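(* Let $p\in\mathbb{N}_0$, $\eta>0$ and $\theta\in\mathbb{R}$, and write $x=\cosh\eta$. Then \begin{align*} (\cosh\eta-\cos\theta)^p\log(\cosh\eta-\cos\theta) &=(\eta-\log 2)(\cosh\eta-\cos\theta)^p\\ &\quad+2\sum_{n=0}^{p}\cos(n\theta)\,e^{-n\eta}\sum_{k=-p}^{n-1}\frac{(-1)^{k+1}e^{k\eta}R_p^k(x)}{n-k}\\ &\quad-2\sum_{n=1}^{p-1}\cos(n\theta)\,e^{n\eta}\sum_{k=-p}^{-n-1}\frac{(-1)^{k+1}e^{k\eta}R_p^k(x)}{n+k}\\ &\quad+2\sum_{n=p+1}^{\infty}\cos(n\theta)\,e^{-n\eta}\sum_{k=-p}^{p}\frac{(-1)^{k+1}e^{k\eta}R_p^k(x)}{n-k}. \end{align*}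
   Context: $\log$ denotes the natural logarithm. The logarithmic polynomials $R_p^k(x)$, for $p\in\mathbb{N}_0$ and $k\in\mathbb{Z}$, are defined by $R_0^0(x)=1$, $R_0^k(x)=0$ for $k\neq 0$, and the recurrence $R_p^k(x)=\tfrac12 R_{p-1}^{k-1}(x)+xR_{p-1}^k(x)+\tfrac12 R_{p-1}^{k+1}(x)$ for $p\ge 1$ (so $R_p^k=0$ unless $-p\le k\le p$). Empty sums (upper limit smaller than lower limit) are zero. *)

theory Defs
  imports "HOL-Analysis.Analysis"
begin

fun logR :: "nat \<Rightarrow> int \<Rightarrow> real \<Rightarrow> real" where
  "logR 0 k x = (if k = 0 then 1 else 0)"
| "logR (Suc p) k x = logR p (k - 1) x / 2 + x * logR p k x + logR p (k + 1) x / 2"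

end

theory Submission
  imports Defs
begin

text \<open>
  The R_p^k(x) are the Laurent coefficients of (x + (w + 1/w)/2)^p; at w = -e^{i\<theta>} this gives
  (x - cos \<theta>)^p = \<Sum>_k (-1)^k R_p^k(x) e^{ik\<theta>}. With z = e^{-\<eta>+i\<theta>},
  log(cosh \<eta> - cos \<theta>) = \<eta> - log 2 + 2 Re log(1 - z) = \<eta> - log 2 - 2 \<Sum>_{m\<ge>1} e^{-m\<eta>} cos(m\<theta>)/m.
  Multiplying the two and substituting n = k + m writes (x - cos \<theta>)^p (log(x - cos \<theta>) - \<eta> + log 2)
  as \<Sum>_k \<Sum>_{n>k} 2 cos(n\<theta>) e^{-n\<eta>} (-1)^{k+1} e^{k\<eta>} R_p^k(x)/(n - k). Cutting each inner
  series at n = p leaves the series over n > p, and the finite triangle -p \<le> k < n \<le> p splits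
  into its parts n \<ge> 0 and n < 0.
\<close>

lemma logR_eq_0: "int p < \<bar>k\<bar> \<Longrightarrow> logR p k x = 0"
  by (induction p arbitrary: k) auto

lemma sum_logR_superset:
  fixes h :: "int \<Rightarrow> 'a::real_vector"
  assumes "finite S" "{-int p..int p} \<subseteq> S"
  shows "(\<Sum>k\<in>S. logR p k x *\<^sub>R h k) = (\<Sum>k\<in>{-int p..int p}. logR p k x *\<^sub>R h k)"
  using assms by (intro sum.mono_neutral_right) (auto simp: logR_eq_0)

lemma sum_logR_shift:
  fixes h :: "int \<Rightarrow> 'a::real_vector"
  assumes "\<bar>d\<bar> \<le> 1"
  shows "(\<Sum>k\<in>{-int (Suc p)..int (Suc p)}. logR p (k + d) x *\<^sub>R h k)
       = (\<Sum>k\<in>{-int p..int p}. logR p k x *\<^sub>R h (k - d))"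
proof -
  have "(\<Sum>k\<in>{-int (Suc p)..int (Suc p)}. logR p (k + d) x *\<^sub>R h k)
      = (\<Sum>k\<in>(\<lambda>k. k + d) ` {-int (Suc p)..int (Suc p)}. logR p k x *\<^sub>R h (k - d))"
    by (subst sum.reindex) (auto simp: inj_on_def)
  also have "\<dots> = (\<Sum>k\<in>{-int p..int p}. logR p k x *\<^sub>R h (k - d))"
    using assms by (intro sum_logR_superset) (auto simp: image_iff intro!: bexI[where x = "_ - d"])
  finally show ?thesis .
qed

lemma logR_generating_function:
  fixes w :: "'a::real_field"
  assumes "w \<noteq> 0"
  shows "(\<Sum>k\<in>{-int p..int p}. logR p k x *\<^sub>R w powi k) = (of_real x + (w + inverse w) / 2) ^ p"
proof (induction p)
  case 0
  show ?case by simp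
next
  case (Suc p)
  let ?S = "\<lambda>h. \<Sum>k\<in>{-int (Suc p)..int (Suc p)}. logR p (k + h) x *\<^sub>R w powi k"
  have "(\<Sum>k\<in>{-int (Suc p)..int (Suc p)}. logR (Suc p) k x *\<^sub>R w powi k)
      = ?S (-1) / 2 + of_real x * ?S 0 + ?S 1 / 2"
    by (simp add: sum.distrib sum_divide_distrib sum_distrib_left scaleR_add_left
                  scaleR_conv_of_real algebra_simps)
  also have "?S (-1) = w * (\<Sum>k\<in>{-int p..int p}. logR p k x *\<^sub>R w powi k)"
    using sum_logR_shift[of "-1" p x "\<lambda>k. w powi k"] assms
    by (simp add: sum_distrib_left power_int_add mult.commute)
  also have "?S 1 = inverse w * (\<Sum>k\<in>{-int p..int p}. logR p k x *\<^sub>R w powi k)"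
    using sum_logR_shift[of 1 p x "\<lambda>k. w powi k"] assms
    by (simp add: sum_distrib_left power_int_diff field_simps)
  also have "?S 0 = (\<Sum>k\<in>{-int p..int p}. logR p k x *\<^sub>R w powi k)"
    using sum_logR_shift[of 0 p x "\<lambda>k. w powi k"] by simp
  finally show ?case
    by (simp add: Suc.IH field_simps)
qed

lemma sum_logR_alternating_cis:
  "(\<Sum>k\<in>{-int p..int p}. ((-1) powi k * logR p k x) *\<^sub>R cis (of_int k * \<theta>)) = of_real ((x - cos \<theta>) ^ p)"
proof -
  have "-cis \<theta> + inverse (- cis \<theta>) = - of_real (2 * cos \<theta>)"
    by (simp add: complex_eq_iff)
  then have "(\<Sum>k\<in>{-int p..int p}. logR p k x *\<^sub>R (- cis \<theta>) powi k) = of_real ((x - cos \<theta>) ^ p)"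
    by (subst logR_generating_function) (auto simp: cis_neq_zero)
  moreover have "logR p k x *\<^sub>R (- cis \<theta>) powi k = ((-1) powi k * logR p k x) *\<^sub>R cis (of_int k * \<theta>)" for k
  proof -
    have "(- cis \<theta>) powi k = (-1) powi k * cis (of_int k * \<theta>)"
      by (metis mult_minus1 power_int_mult_distrib cis_power_int)
    then show ?thesis
      by (simp add: scaleR_conv_of_real)
  qed
  ultimately show ?thesis
    by simp
qed

lemma cosh_minus_cos_eq_norm_squared:
  "cosh \<eta> - cos \<theta> = exp \<eta> / 2 * (cmod (1 - exp (Complex (-\<eta>) \<theta>)))^2"
proof -
  have "(cmod (1 - exp (Complex (-\<eta>) \<theta>)))^2
      = (1 - exp (-\<eta>) * cos \<theta>)^2 + (exp (-\<eta>) * sin \<theta>)^2"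
    by (simp add: cmod_power2 Re_exp Im_exp)
  also have "\<dots> = 1 - 2 * exp (-\<eta>) * cos \<theta> + exp (-\<eta>)^2 * ((sin \<theta>)^2 + (cos \<theta>)^2)"
    by algebra
  also have "\<dots> = 1 - 2 * exp (-\<eta>) * cos \<theta> + exp (-\<eta>)^2"
    by simp
  finally show ?thesis
    by (simp add: cosh_def exp_minus power2_eq_square field_simps)
qed

lemma ln_cosh_minus_cos:
  assumes "\<eta> > 0"
  shows "ln (cosh \<eta> - cos \<theta>) = \<eta> - ln 2 + 2 * Re (ln (1 - exp (Complex (-\<eta>) \<theta>)))"
proof -
  let ?z = "exp (Complex (-\<eta>) \<theta>)"
  have "cmod ?z < 1"
    using assms by (simp add: norm_exp_eq_Re)
  then have "cmod (1 - ?z) > 0"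
    by (metis norm_one order.irrefl right_minus_eq zero_less_norm_iff)
  then show ?thesis
    by (simp add: cosh_minus_cos_eq_norm_squared ln_mult ln_div ln_realpow)
qed

lemma sums_exp_cos_over_Suc:
  assumes "\<eta> > 0"
  shows "(\<lambda>m. exp (- real (Suc m) * \<eta>) * cos (\<phi> + real (Suc m) * \<theta>) / real (Suc m))
           sums - Re (cis \<phi> * ln (1 - exp (Complex (-\<eta>) \<theta>)))"
proof -
  let ?z = "exp (Complex (-\<eta>) \<theta>)"
  have "(\<lambda>m. ?z ^ m / of_nat m) sums - ln (1 - ?z)"
    using sums_minus[OF Ln_series'[of "- ?z"]] assms by (simp add: norm_exp_eq_Re)
  then have "(\<lambda>m. ?z ^ Suc m / of_nat (Suc m)) sums - ln (1 - ?z)"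
    by (subst sums_Suc_iff) simp
  then have series: "(\<lambda>m. Re (cis \<phi> * (?z ^ Suc m / of_nat (Suc m)))) sums Re (cis \<phi> * - ln (1 - ?z))"
    by (intro sums_Re sums_mult)
  have term_eq: "Re (cis \<phi> * (?z ^ n / of_nat n)) = exp (- real n * \<eta>) * cos (\<phi> + real n * \<theta>) / real n"
    for n
  proof -
    have "Complex (- real n * \<eta>) (\<phi> + real n * \<theta>) = \<i> * of_real \<phi> + of_nat n * Complex (-\<eta>) \<theta>"
      by (simp add: complex_eq_iff)
    then have "cis \<phi> * ?z ^ n = exp (Complex (- real n * \<eta>) (\<phi> + real n * \<theta>))"
      by (simp add: cis_conv_exp exp_of_nat_mult[symmetric] exp_add)
    then show ?thesis
      by (simp only: times_divide_eq_right Re_divide_of_nat Re_exp complex.sel)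
  qed
  show ?thesis
    using series unfolding term_eq by simp
qed

lemma sum_int_triangle_swap:
  "(\<Sum>k\<in>{a..b::int}. \<Sum>n\<in>{k+1..b}. f k n) = (\<Sum>n\<in>{a..b}. \<Sum>k\<in>{a..n-1}. f k n)"
proof -
  have "(\<Sum>k\<in>{a..b}. \<Sum>n\<in>{k+1..b}. f k n) = (\<Sum>k\<in>{a..b}. \<Sum>n\<in>{n\<in>{a..b}. k < n}. f k n)"
    by (intro sum.cong refl) auto
  also have "\<dots> = (\<Sum>n\<in>{a..b}. \<Sum>k\<in>{k\<in>{a..b}. k < n}. f k n)"
    by (rule sum.swap_restrict) simp_all
  also have "\<dots> = (\<Sum>n\<in>{a..b}. \<Sum>k\<in>{a..n-1}. f k n)"
    by (intro sum.cong refl) auto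
  finally show ?thesis .
qed

lemma sums_tails_of_shifted_series:
  fixes t :: "int \<Rightarrow> int \<Rightarrow> 'a::real_normed_vector"
  assumes "\<And>k. k \<in> {a..b} \<Longrightarrow> (\<lambda>m. t k (k + 1 + int m)) sums s k"
  shows "(\<lambda>m. \<Sum>k\<in>{a..b}. t k (b + 1 + int m))
           sums ((\<Sum>k\<in>{a..b}. s k) - (\<Sum>n\<in>{a..b}. \<Sum>k\<in>{a..n-1}. t k n))"
proof -
  have "(\<lambda>m. t k (b + 1 + int m)) sums (s k - (\<Sum>n\<in>{k+1..b}. t k n))" if k: "k \<in> {a..b}" for k
  proof -
    have "(\<lambda>m. t k (k + 1 + int (m + nat (b - k)))) sums (s k - (\<Sum>i<nat (b - k). t k (k + 1 + int i)))"
      using assms[OF k] by (rule sums_split_initial_segment)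
    moreover have "(\<Sum>i<nat (b - k). t k (k + 1 + int i)) = (\<Sum>n\<in>{k+1..b}. t k n)"
      by (rule sum.reindex_bij_witness[where i = "\<lambda>n. nat (n - k - 1)" and j = "\<lambda>i. k + 1 + int i"]) auto
    ultimately show ?thesis
      using k by (simp add: ac_simps)
  qed
  then have "(\<lambda>m. \<Sum>k\<in>{a..b}. t k (b + 1 + int m)) sums (\<Sum>k\<in>{a..b}. s k - (\<Sum>n\<in>{k+1..b}. t k n))"
    by (rule sums_sum)
  then show ?thesis
    by (simp add: sum_subtractf sum_int_triangle_swap)
qed

lemma sum_symmetric_int_interval:
  "(\<Sum>n\<in>{-int p..int p}. f n) = (\<Sum>n=0..p. f (int n)) + (\<Sum>n=1..p. f (- int n))"
proof -
  have "{-int p..int p} = int ` {0..p} \<union> (\<lambda>n. - int n) ` {1..p}" (is "_ = ?A \<union> ?B")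
  proof (intro equalityI subsetI)
    fix n
    assume n: "n \<in> {-int p..int p}"
    show "n \<in> ?A \<union> ?B"
    proof (cases "n \<ge> 0")
      case True
      then have "n = int (nat n)" "nat n \<in> {0..p}"
        using n by auto
      then show ?thesis
        by blast
    next
      case False
      then have "n = - int (nat (- n))" "nat (- n) \<in> {1..p}"
        using n by auto
      then show ?thesis
        by blast
    qed
  qed auto
  moreover have "int ` {0..p} \<inter> (\<lambda>n. - int n) ` {1..p} = {}"
    by auto
  ultimately show ?thesis
    by (simp add: sum.union_disjoint sum.reindex inj_on_def)
qed

definition logR_term :: "nat \<Rightarrow> real \<Rightarrow> real \<Rightarrow> int \<Rightarrow> int \<Rightarrow> real" where
  "logR_term p \<eta> \<theta> k n = 2 * cos (of_int n * \<theta>) * exp (- of_int n * \<eta>) *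
     ((-1) powi (k + 1) * exp (of_int k * \<eta>) * logR p k (cosh \<eta>) / (of_int n - of_int k))"

lemma logR_term_neg:
  "logR_term p \<eta> \<theta> k (- int n) = - 2 * (cos (real n * \<theta>) * exp (real n * \<eta>) *
     ((-1) powi (k + 1) * exp (real_of_int k * \<eta>) * logR p k (cosh \<eta>) / (real n + real_of_int k)))"
proof -
  have "c / (- real n - real_of_int k) = - (c / (real n + real_of_int k))" for c
    by (subst divide_minus_right[symmetric]) simp
  then show ?thesis
    by (simp add: logR_term_def)
qed

lemma sums_logR_term_tails:
  assumes "\<eta> > 0"
  shows "(\<lambda>m. \<Sum>k\<in>{-int p..int p}. logR_term p \<eta> \<theta> k (int p + 1 + int m)) sums
           ((cosh \<eta> - cos \<theta>) ^ p * (ln (cosh \<eta> - cos \<theta>) - (\<eta> - ln 2))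
            - (\<Sum>n\<in>{-int p..int p}. \<Sum>k\<in>{-int p..n-1}. logR_term p \<eta> \<theta> k n))"
proof -
  define L where "L = ln (1 - exp (Complex (-\<eta>) \<theta>))"
  define a where "a k = (-1) powi k * logR p k (cosh \<eta>)" for k
  define s where "s k = 2 * a k * Re (cis (of_int k * \<theta>) * L)" for k
  have "(\<lambda>m. logR_term p \<eta> \<theta> k (k + 1 + int m)) sums s k" for k
  proof -
    have "logR_term p \<eta> \<theta> k (k + 1 + int m) = - 2 * a k *
        (exp (- real (Suc m) * \<eta>) * cos (of_int k * \<theta> + real (Suc m) * \<theta>) / real (Suc m))" for m
      by (simp add: logR_term_def a_def power_int_add exp_add[symmetric] algebra_simps)
    then show ?thesis
      using sums_mult[OF sums_exp_cos_over_Suc[OF assms, where \<phi> = "of_int k * \<theta>" and \<theta> = \<theta>], of "- 2 * a k"]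
      by (simp add: s_def L_def right_diff_distrib)
  qed
  then have tails: "(\<lambda>m. \<Sum>k\<in>{-int p..int p}. logR_term p \<eta> \<theta> k (int p + 1 + int m)) sums
      ((\<Sum>k\<in>{-int p..int p}. s k) - (\<Sum>n\<in>{-int p..int p}. \<Sum>k\<in>{-int p..n-1}. logR_term p \<eta> \<theta> k n))"
    by (rule sums_tails_of_shifted_series)
  have "(\<Sum>k\<in>{-int p..int p}. s k) = 2 * Re (of_real ((cosh \<eta> - cos \<theta>) ^ p) * L)"
    unfolding sum_logR_alternating_cis[where p = p and x = "cosh \<eta>" and \<theta> = \<theta>, symmetric, folded a_def]
    by (simp add: s_def sum_distrib_left sum_distrib_right scaleR_conv_of_real algebra_simps)
  also have "\<dots> = (cosh \<eta> - cos \<theta>) ^ p * (ln (cosh \<eta> - cos \<theta>) - (\<eta> - ln 2))"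
    by (simp add: L_def ln_cosh_minus_cos[OF assms])
  finally show ?thesis
    using tails by simp
qed

theorem mainTheorem1:
  fixes p :: nat and \<eta> \<theta> :: real
  assumes "\<eta> > 0"
  defines "x \<equiv> cosh \<eta>"
  shows "(\<lambda>m. let n = m + p + 1 in
            2 * cos (real n * \<theta>) * exp (- real n * \<eta>) *
            (\<Sum>k\<in>{-int p..int p}. (-1) powi (k + 1) * exp (real_of_int k * \<eta>) * logR p k x
                                        / (real n - real_of_int k)))
         sums
         ((cosh \<eta> - cos \<theta>) ^ p * ln (cosh \<eta> - cos \<theta>)
          - ((\<eta> - ln 2) * (cosh \<eta> - cos \<theta>) ^ p
             + 2 * (\<Sum>n=0..p. cos (real n * \<theta>) * exp (- real n * \<eta>) *
                 (\<Sum>k\<in>{-int p..int n - 1}. (-1) powi (k + 1) * exp (real_of_int k * \<eta>) * logR p k x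
                                        / (real n - real_of_int k)))
             - 2 * (\<Sum>n\<in>{1..<p}. cos (real n * \<theta>) * exp (real n * \<eta>) *
                 (\<Sum>k\<in>{-int p..-int n - 1}. (-1) powi (k + 1) * exp (real_of_int k * \<eta>) * logR p k x
                                        / (real n + real_of_int k)))))"
proof -
  let ?t = "logR_term p \<eta> \<theta>"
  have series_term: "(let n = m + p + 1 in
            2 * cos (real n * \<theta>) * exp (- real n * \<eta>) *
            (\<Sum>k\<in>{-int p..int p}. (-1) powi (k + 1) * exp (real_of_int k * \<eta>) * logR p k x
                                        / (real n - real_of_int k)))
      = (\<Sum>k\<in>{-int p..int p}. ?t k (int p + 1 + int m))" for m
    by (simp add: Let_def logR_term_def x_def sum_distrib_left algebra_simps)
  have nonneg_part: "2 * (\<Sum>n=0..p. cos (real n * \<theta>) * exp (- real n * \<eta>) *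
                 (\<Sum>k\<in>{-int p..int n - 1}. (-1) powi (k + 1) * exp (real_of_int k * \<eta>) * logR p k x
                                        / (real n - real_of_int k)))
      = (\<Sum>n=0..p. \<Sum>k\<in>{-int p..int n - 1}. ?t k (int n))"
    by (simp add: logR_term_def x_def sum_distrib_left mult.assoc)
  have "(\<Sum>n=1..p. \<Sum>k\<in>{-int p..- int n - 1}. ?t k (- int n))
      = (\<Sum>n\<in>{1..<p}. \<Sum>k\<in>{-int p..- int n - 1}. ?t k (- int n))"
    by (rule sum.mono_neutral_right) auto
  also have "\<dots> = - 2 * (\<Sum>n\<in>{1..<p}. cos (real n * \<theta>) * exp (real n * \<eta>) *
                 (\<Sum>k\<in>{-int p..-int n - 1}. (-1) powi (k + 1) * exp (real_of_int k * \<eta>) * logR p k x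
                                        / (real n + real_of_int k)))"
    by (simp add: logR_term_neg x_def sum_distrib_left)
  finally have negative_part: "(\<Sum>n=1..p. \<Sum>k\<in>{-int p..- int n - 1}. ?t k (- int n)) = \<dots>" .
  show ?thesis (is "_ sums ?rhs")
  proof -
    have "?rhs = (cosh \<eta> - cos \<theta>) ^ p * (ln (cosh \<eta> - cos \<theta>) - (\<eta> - ln 2))
        - (\<Sum>n\<in>{-int p..int p}. \<Sum>k\<in>{-int p..n-1}. ?t k n)"
      unfolding sum_symmetric_int_interval[of _ p] nonneg_part negative_part by (simp add: algebra_simps)
    then show ?thesis
      unfolding series_term using sums_logR_term_tails[OF assms(1), of p \<theta>] by simp
  qed
qed

end
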